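(* Let $(V_{cl}, V_{op}, m_{cl-op})$ be an open-closed field algebra and let $\mathbb{Y}_{cl-op}(u; z, \bar{z})v := m_{cl-op}^{(1;1)}(u;v;z,\bar{z};0)$ for $u\in V_{cl}$, $v\in V_{op}$, $z\in \mathbb{H}$. Then for $u\in V_{cl}$, \begin{eqnarray*} [\mathbf{d}_{op}, \mathbb{Y}_{cl-op}(u; z, \bar{z})] &=& \mathbb{Y}_{cl-op}((\mathbf{d}_{cl}^L + \mathbf{d}_{cl}^R)u; z, \bar{z}) + \left( z\frac{\partial}{\partial z} + \bar{z} \frac{\partial}{\partial \bar{z}} \right) \mathbb{Y}_{cl-op}(u; z, \bar{z}). \end{eqnarray*}
   Context: An open-closed field algebra consists of an $\mathbb{R}\times\mathbb{R}$-graded full field algebra $(V_{cl}, m_{cl}, \mathbf{d}_{cl}^L, \mathbf{d}_{cl}^R, D_{cl}^L, D_{cl}^R)$ (with left/right grading operators $\mathbf{d}_{cl}^L,\mathbf{d}_{cl}^R$), an $\mathbb{R}$-graded vector space $V_{op}$ with grading operator $\mathbf{d}_{op}$ and an operator $D_{op}$, and maps $m_{cl-op}^{(l;n)}: V_{cl}^{\otimes l}\otimes V_{op}^{\otimes n}\times M_{\mathbb{H}}^l\times\Lambda^n\to\overline{V}_{op}$ (with $M_{\mathbb{H}}^l$ the configuration space of $l$ distinct points in the upper half plane $\mathbb{H}$ and $\Lambda^n=\{r_1>\dots>r_n\geq 0\}$), linear in the vector arguments and smooth in the positions, satisfying identity, convergence, permutation, $D_{op}$ and the following grading property: for $a\in\mathbb{R}$,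 $e^{a\mathbf{d}_{op}} m_{cl-op}^{(l;n)}(u_1,\dots,u_l;v_1,\dots,v_n;z_1,\bar z_1,\dots,z_l,\bar z_l;r_1,\dots,r_n) = m_{cl-op}^{(l;n)}(e^{a(\mathbf{d}_{cl}^L+\mathbf{d}_{cl}^R)}u_1,\dots,e^{a(\mathbf{d}_{cl}^L+\mathbf{d}_{cl}^R)}u_l; e^{a\mathbf{d}_{op}}v_1,\dots,e^{a\mathbf{d}_{op}}v_n; e^az_1,e^a\bar z_1,\dots,e^az_l,e^a\bar z_l; e^ar_1,\dots,e^ar_n)$. *)

theory Defs
  imports "HOL-Analysis.Analysis"
begin

text \<open>A graded space with index set 'i (R for V_op, R x R for V_cl) is given by
  its homogeneous subspaces W i.  The graded space itself is the direct sum, realised as the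
  finitely supported families of homogeneous components; its algebraic completion is the
  direct product (all families).\<close>

definition graded_space :: "('i \<Rightarrow> 'v::zero set) \<Rightarrow> ('i \<Rightarrow> 'v) set" where
  "graded_space W = {w. finite {i. w i \<noteq> 0} \<and> (\<forall>i. w i \<in> W i)}"

definition graded_completion :: "('i \<Rightarrow> 'v set) \<Rightarrow> ('i \<Rightarrow> 'v) set" where
  "graded_completion W = {w. \<forall>i. w i \<in> W i}"

definition fam_add :: "('i \<Rightarrow> 'v::plus) \<Rightarrow> ('i \<Rightarrow> 'v) \<Rightarrow> ('i \<Rightarrow> 'v)" where
  "fam_add w1 w2 = (\<lambda>i. w1 i + w2 i)"

definition fam_scale :: "(complex \<Rightarrow> 'v \<Rightarrow> 'v) \<Rightarrow> complex \<Rightarrow> ('i \<Rightarrow> 'v) \<Rightarrow> ('i \<Rightarrow> 'v)" where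
  "fam_scale sc c w = (\<lambda>i. sc c (w i))"

definition fam_diff :: "('i \<Rightarrow> 'v::minus) \<Rightarrow> ('i \<Rightarrow> 'v) \<Rightarrow> ('i \<Rightarrow> 'v)" where
  "fam_diff w1 w2 = (\<lambda>i. w1 i - w2 i)"

definition d_op :: "(complex \<Rightarrow> 'v \<Rightarrow> 'v) \<Rightarrow> (real \<Rightarrow> 'v) \<Rightarrow> (real \<Rightarrow> 'v)" where
  "d_op sc w = (\<lambda>n. sc (complex_of_real n) (w n))"

definition d_cl_LR :: "(complex \<Rightarrow> 'v \<Rightarrow> 'v) \<Rightarrow> (real \<times> real \<Rightarrow> 'v) \<Rightarrow> (real \<times> real \<Rightarrow> 'v)" where
  "d_cl_LR sc u = (\<lambda>(p, q). sc (complex_of_real (p + q)) (u (p, q)))"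

definition exp_d_op :: "(complex \<Rightarrow> 'v \<Rightarrow> 'v) \<Rightarrow> real \<Rightarrow> (real \<Rightarrow> 'v) \<Rightarrow> (real \<Rightarrow> 'v)" where
  "exp_d_op sc a w = (\<lambda>n. sc (complex_of_real (exp (a * n))) (w n))"

definition exp_d_cl_LR :: "(complex \<Rightarrow> 'v \<Rightarrow> 'v) \<Rightarrow> real \<Rightarrow> (real \<times> real \<Rightarrow> 'v) \<Rightarrow> (real \<times> real \<Rightarrow> 'v)" where
  "exp_d_cl_LR sc a u = (\<lambda>(p, q). sc (complex_of_real (exp (a * (p + q)))) (u (p, q)))"

fun C_k_on :: "nat \<Rightarrow> 'a::euclidean_space set \<Rightarrow> ('a \<Rightarrow> 'b::real_normed_vector) \<Rightarrow> bool" where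
  "C_k_on 0 S f = continuous_on S f"
| "C_k_on (Suc k) S f =
     (\<exists>D. (\<forall>x\<in>S. (f has_derivative D x) (at x within S)) \<and>
          (\<forall>b\<in>Basis. C_k_on k S (\<lambda>x. D x b)))"

definition smooth_on :: "'a::euclidean_space set \<Rightarrow> ('a \<Rightarrow> 'b::real_normed_vector) \<Rightarrow> bool" where
  "smooth_on S f = (\<forall>k. C_k_on k S f)"

definition upper_half_plane :: "complex set" where
  "upper_half_plane = {z. 0 < Im z}"

definition pos_11 :: "(complex \<times> real) set" where
  "pos_11 = upper_half_plane \<times> {0..}"

text \<open>m11 u v z r stands for m_cl-op^(1;1)(u; v; z, conj z; r), with values in the completion
  of V_op.\<close>

definition oc_field_algebra_11 ::
  "(complex \<Rightarrow> 'c::ab_group_add \<Rightarrow> 'c) \<Rightarrow> (real \<times> real \<Rightarrow> 'c set) \<Rightarrow>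
   (complex \<Rightarrow> 'o::ab_group_add \<Rightarrow> 'o) \<Rightarrow> (real \<Rightarrow> 'o set) \<Rightarrow>
   ((real \<times> real \<Rightarrow> 'c) \<Rightarrow> (real \<Rightarrow> 'o) \<Rightarrow> complex \<Rightarrow> real \<Rightarrow> (real \<Rightarrow> 'o)) \<Rightarrow> bool" where
  "oc_field_algebra_11 sc_cl Wcl sc_op Wop m11 \<longleftrightarrow>
     vector_space sc_cl \<and> vector_space sc_op \<and>
     (\<forall>k. module.subspace sc_cl (Wcl k)) \<and> (\<forall>n. module.subspace sc_op (Wop n)) \<and>
     \<comment> \<open>values lie in the algebraic completion\<close>
     (\<forall>u v z r. u \<in> graded_space Wcl \<longrightarrow> v \<in> graded_space Wop \<longrightarrow> (z, r) \<in> pos_11 \<longrightarrow>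
        m11 u v z r \<in> graded_completion Wop) \<and>
     \<comment> \<open>linearity in the closed-string argument\<close>
     (\<forall>u1 u2 v z r. u1 \<in> graded_space Wcl \<longrightarrow> u2 \<in> graded_space Wcl \<longrightarrow>
        v \<in> graded_space Wop \<longrightarrow> (z, r) \<in> pos_11 \<longrightarrow>
        m11 (fam_add u1 u2) v z r = fam_add (m11 u1 v z r) (m11 u2 v z r)) \<and>
     (\<forall>c u v z r. u \<in> graded_space Wcl \<longrightarrow> v \<in> graded_space Wop \<longrightarrow> (z, r) \<in> pos_11 \<longrightarrow>
        m11 (fam_scale sc_cl c u) v z r = fam_scale sc_op c (m11 u v z r)) \<and>
     \<comment> \<open>linearity in the open-string argument\<close>
     (\<forall>u v1 v2 z r. u \<in> graded_space Wcl \<longrightarrow> v1 \<in> graded_space Wop \<longrightarrow>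
        v2 \<in> graded_space Wop \<longrightarrow> (z, r) \<in> pos_11 \<longrightarrow>
        m11 u (fam_add v1 v2) z r = fam_add (m11 u v1 z r) (m11 u v2 z r)) \<and>
     (\<forall>c u v z r. u \<in> graded_space Wcl \<longrightarrow> v \<in> graded_space Wop \<longrightarrow> (z, r) \<in> pos_11 \<longrightarrow>
        m11 u (fam_scale sc_op c v) z r = fam_scale sc_op c (m11 u v z r)) \<and>
     \<comment> \<open>smoothness in the positions\<close>
     (\<forall>u v n (\<phi>::'o \<Rightarrow> complex). u \<in> graded_space Wcl \<longrightarrow> v \<in> graded_space Wop \<longrightarrow>
        Vector_Spaces.linear sc_op (*) \<phi> \<longrightarrow>
        smooth_on pos_11 (\<lambda>(z, r). \<phi> (m11 u v z r n))) \<and>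
     \<comment> \<open>grading property\<close>
     (\<forall>a u v z r. u \<in> graded_space Wcl \<longrightarrow> v \<in> graded_space Wop \<longrightarrow> (z, r) \<in> pos_11 \<longrightarrow>
        exp_d_op sc_op a (m11 u v z r) =
        m11 (exp_d_cl_LR sc_cl a u) (exp_d_op sc_op a v) (complex_of_real (exp a) * z) (exp a * r))"

end

theory Submission
  imports Defs
begin

text \<open>Paired with a linear functional, the n-th component of m11 at a fixed position is bilinear
  in (u, v), so it is a finite sum of entries A k j, one for each pair of homogeneous components
  of u and v.  By the grading property, along the ray e^a z the entry A k j is multiplied by
  e^(a (n - wt k - j)), where wt k is the total weight of k.  Differentiating at a = 0, the
  chain rule turns the left-hand side into the derivative of w \<mapsto> \<phi>(Y(u; w) v)_n in the
  direction z, and the right-hand side into the sum of the entries weighted by n - wt k - j,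
  which is exactly the commutator with d_op minus the action of d_cl^L + d_cl^R.\<close>

definition fam_single :: "'i \<Rightarrow> 'v::zero \<Rightarrow> 'i \<Rightarrow> 'v" where
  "fam_single k x = (\<lambda>i. if i = k then x else 0)"

definition fam_scale_by ::
    "(complex \<Rightarrow> 'v \<Rightarrow> 'v) \<Rightarrow> ('i \<Rightarrow> complex) \<Rightarrow> ('i \<Rightarrow> 'v) \<Rightarrow> ('i \<Rightarrow> 'v)" where
  "fam_scale_by sc c w = (\<lambda>i. sc (c i) (w i))"

lemma d_op_eq_fam_scale_by: "d_op sc w = fam_scale_by sc complex_of_real w"
  by (simp add: d_op_def fam_scale_by_def)

lemma d_cl_LR_eq_fam_scale_by:
  "d_cl_LR sc u = fam_scale_by sc (\<lambda>k. complex_of_real (fst k + snd k)) u"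
  by (auto simp: d_cl_LR_def fam_scale_by_def)

lemma exp_d_op_eq_fam_scale_by:
  "exp_d_op sc a w = fam_scale_by sc (\<lambda>j. complex_of_real (exp (a * j))) w"
  by (simp add: exp_d_op_def fam_scale_by_def)

lemma exp_d_cl_LR_eq_fam_scale_by:
  "exp_d_cl_LR sc a u = fam_scale_by sc (\<lambda>k. complex_of_real (exp (a * (fst k + snd k)))) u"
  by (auto simp: exp_d_cl_LR_def fam_scale_by_def)

lemma fam_scale_by_one:
  assumes "vector_space sc"
  shows "fam_scale_by sc (\<lambda>_. 1) w = w"
proof -
  interpret vector_space sc by fact
  show ?thesis by (simp add: fam_scale_by_def)
qed

lemma fam_scale_by_fam_scale_by:
  assumes "vector_space sc"
  shows "fam_scale_by sc c (fam_scale_by sc d w) = fam_scale_by sc (\<lambda>i. c i * d i) w"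
proof -
  interpret vector_space sc by fact
  show ?thesis by (simp add: fam_scale_by_def)
qed

lemma fam_single_in_graded_space:
  assumes "vector_space sc" and "\<forall>i. module.subspace sc (W i)" and "w \<in> graded_space W"
  shows "fam_single k (w k) \<in> graded_space W"
proof -
  interpret vector_space sc by fact
  have "{i. fam_single k (w k) i \<noteq> 0} \<subseteq> {k}"
    by (auto simp: fam_single_def)
  then show ?thesis
    using assms subspace_0 by (auto simp: graded_space_def fam_single_def intro: finite_subset)
qed

lemma fam_scale_by_support:
  assumes "vector_space sc"
  shows "{i. fam_scale_by sc c w i \<noteq> 0} \<subseteq> {i. w i \<noteq> 0}"
proof -
  interpret vector_space sc by fact
  show ?thesis by (auto simp: fam_scale_by_def)
qed

lemma fam_scale_by_in_graded_space:
  assumes "vector_space sc" and "\<forall>i. module.subspace sc (W i)" and "w \<in> graded_space W"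
  shows "fam_scale_by sc c w \<in> graded_space W"
proof -
  interpret vector_space sc by fact
  show ?thesis
    using assms subspace_scale fam_scale_by_support[OF assms(1), of c w]
    by (auto simp: graded_space_def fam_scale_by_def intro: finite_subset)
qed

lemma additive_on_graded_space_eq_sum_components:
  assumes "vector_space sc" and W: "\<forall>i. module.subspace sc (W i)"
    and add: "\<And>x y. x \<in> graded_space W \<Longrightarrow> y \<in> graded_space W \<Longrightarrow>
                f (fam_add x y) = f x + (f y :: 'a::cancel_comm_monoid_add)"
    and "finite S" and "w \<in> graded_space W" and "{i. w i \<noteq> 0} \<subseteq> S"
  shows "f w = (\<Sum>k\<in>S. f (fam_single k (w k)))"
  using \<open>finite S\<close> \<open>w \<in> graded_space W\<close> \<open>{i. w i \<noteq> 0} \<subseteq> S\<close>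
proof (induction S arbitrary: w rule: finite_induct)
  case empty
  interpret vector_space sc by fact
  have zero: "(\<lambda>_. 0) \<in> graded_space W"
    using W subspace_0 by (simp add: graded_space_def)
  have "f (\<lambda>_. 0) = f (\<lambda>_. 0) + f (\<lambda>_. 0)"
    using add[OF zero zero] by (simp add: fam_add_def)
  moreover have "w = (\<lambda>_. 0)"
    using empty by auto
  ultimately show ?case
    using add_left_imp_eq[of "f (\<lambda>_. 0)" "f (\<lambda>_. 0)" 0] by simp
next
  case (insert k S)
  interpret vector_space sc by fact
  define rest where "rest = w(k := 0)"
  have rest: "rest \<in> graded_space W"
    using insert.prems W subspace_0 unfolding rest_def graded_space_def
    by (auto intro: finite_subset[of _ "{i. w i \<noteq> 0}"])
  have "w = fam_add (fam_single k (w k)) rest"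
    by (auto simp: fam_add_def fam_single_def rest_def)
  then have "f w = f (fam_single k (w k)) + f rest"
    using add rest fam_single_in_graded_space[OF assms(1) W insert.prems(1)] by metis
  also have "f rest = (\<Sum>j\<in>S. f (fam_single j (rest j)))"
    using insert.prems(2) by (intro insert.IH[OF rest]) (auto simp: rest_def)
  also have "\<dots> = (\<Sum>j\<in>S. f (fam_single j (w j)))"
    using insert.hyps by (intro sum.cong) (auto simp: rest_def)
  finally show ?case
    using insert.hyps by simp
qed

lemma linear_on_graded_space_fam_scale_by:
  assumes "vector_space sc" and W: "\<forall>i. module.subspace sc (W i)"
    and add: "\<And>x y. x \<in> graded_space W \<Longrightarrow> y \<in> graded_space W \<Longrightarrow>
                f (fam_add x y) = f x + (f y :: complex)"
    and scale: "\<And>c x. x \<in> graded_space W \<Longrightarrow> f (fam_scale sc c x) = c * f x"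
    and w: "w \<in> graded_space W"
  shows "f (fam_scale_by sc c w) = (\<Sum>k\<in>{i. w i \<noteq> 0}. c k * f (fam_single k (w k)))"
proof -
  interpret vector_space sc by fact
  have "finite {i. w i \<noteq> 0}"
    using w by (simp add: graded_space_def)
  then have "f (fam_scale_by sc c w) =
      (\<Sum>k\<in>{i. w i \<noteq> 0}. f (fam_single k (fam_scale_by sc c w k)))"
    using fam_scale_by_in_graded_space[OF assms(1) W w] fam_scale_by_support[OF assms(1), of c w]
    by (intro additive_on_graded_space_eq_sum_components[OF assms(1) W add])
  also have "\<dots> = (\<Sum>k\<in>{i. w i \<noteq> 0}. c k * f (fam_single k (w k)))"
  proof (rule sum.cong[OF refl])
    fix k
    have "fam_single k (fam_scale_by sc c w k) = fam_scale sc (c k) (fam_single k (w k))"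
      by (auto simp: fam_single_def fam_scale_by_def fam_scale_def)
    then show "f (fam_single k (fam_scale_by sc c w k)) = c k * f (fam_single k (w k))"
      using scale fam_single_in_graded_space[OF assms(1) W w] by simp
  qed
  finally show ?thesis .
qed

lemma oc_field_algebra_11_vector_spaces:
  assumes "oc_field_algebra_11 sc_cl Wcl sc_op Wop m11"
  shows "vector_space sc_cl" and "\<forall>k. module.subspace sc_cl (Wcl k)"
    and "vector_space sc_op" and "\<forall>n. module.subspace sc_op (Wop n)"
  using assms unfolding oc_field_algebra_11_def by simp_all

lemma oc_field_algebra_11_add_cl:
  assumes "oc_field_algebra_11 sc_cl Wcl sc_op Wop m11"
    and "u1 \<in> graded_space Wcl" and "u2 \<in> graded_space Wcl" and "v \<in> graded_space Wop"
    and "(z, r) \<in> pos_11"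
  shows "m11 (fam_add u1 u2) v z r = fam_add (m11 u1 v z r) (m11 u2 v z r)"
  using assms unfolding oc_field_algebra_11_def by simp

lemma oc_field_algebra_11_scale_cl:
  assumes "oc_field_algebra_11 sc_cl Wcl sc_op Wop m11"
    and "u \<in> graded_space Wcl" and "v \<in> graded_space Wop" and "(z, r) \<in> pos_11"
  shows "m11 (fam_scale sc_cl c u) v z r = fam_scale sc_op c (m11 u v z r)"
  using assms unfolding oc_field_algebra_11_def by simp

lemma oc_field_algebra_11_add_op:
  assumes "oc_field_algebra_11 sc_cl Wcl sc_op Wop m11"
    and "u \<in> graded_space Wcl" and "v1 \<in> graded_space Wop" and "v2 \<in> graded_space Wop"
    and "(z, r) \<in> pos_11"
  shows "m11 u (fam_add v1 v2) z r = fam_add (m11 u v1 z r) (m11 u v2 z r)"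
  using assms unfolding oc_field_algebra_11_def by simp

lemma oc_field_algebra_11_scale_op:
  assumes "oc_field_algebra_11 sc_cl Wcl sc_op Wop m11"
    and "u \<in> graded_space Wcl" and "v \<in> graded_space Wop" and "(z, r) \<in> pos_11"
  shows "m11 u (fam_scale sc_op c v) z r = fam_scale sc_op c (m11 u v z r)"
  using assms unfolding oc_field_algebra_11_def by simp

lemma oc_field_algebra_11_smooth:
  assumes "oc_field_algebra_11 sc_cl Wcl sc_op Wop m11"
    and "u \<in> graded_space Wcl" and "v \<in> graded_space Wop"
    and "Vector_Spaces.linear sc_op (*) \<phi>"
  shows "smooth_on pos_11 (\<lambda>(z, r). \<phi> (m11 u v z r n))"
  using assms unfolding oc_field_algebra_11_def by simp

lemma oc_field_algebra_11_grading:
  assumes "oc_field_algebra_11 sc_cl Wcl sc_op Wop m11"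
    and "u \<in> graded_space Wcl" and "v \<in> graded_space Wop" and "(z, r) \<in> pos_11"
  shows "exp_d_op sc_op a (m11 u v z r) =
    m11 (exp_d_cl_LR sc_cl a u) (exp_d_op sc_op a v) (complex_of_real (exp a) * z) (exp a * r)"
  using assms unfolding oc_field_algebra_11_def by simp

lemma oc_field_algebra_11_bilinear_expansion:
  assumes alg: "oc_field_algebra_11 sc_cl Wcl sc_op Wop m11"
    and "Vector_Spaces.linear sc_op (*) \<phi>"
    and u: "u \<in> graded_space Wcl" and v: "v \<in> graded_space Wop" and zr: "(z, r) \<in> pos_11"
  shows "\<phi> (m11 (fam_scale_by sc_cl c u) (fam_scale_by sc_op d v) z r n) =
    (\<Sum>k\<in>{k. u k \<noteq> 0}. \<Sum>j\<in>{j. v j \<noteq> 0}.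
       c k * d j * \<phi> (m11 (fam_single k (u k)) (fam_single j (v j)) z r n))"
proof -
  interpret \<phi>: Vector_Spaces.linear sc_op "(*)" \<phi> by fact
  note V = oc_field_algebra_11_vector_spaces[OF alg]
  have v': "fam_scale_by sc_op d v \<in> graded_space Wop"
    using fam_scale_by_in_graded_space[OF V(3,4) v] .
  have "\<phi> (m11 (fam_scale_by sc_cl c u) (fam_scale_by sc_op d v) z r n) =
      (\<Sum>k\<in>{k. u k \<noteq> 0}. c k * \<phi> (m11 (fam_single k (u k)) (fam_scale_by sc_op d v) z r n))"
    by (rule linear_on_graded_space_fam_scale_by[OF V(1,2) _ _ u])
      (simp_all add: oc_field_algebra_11_add_cl[OF alg _ _ v' zr]
        oc_field_algebra_11_scale_cl[OF alg _ v' zr],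
       simp_all add: fam_add_def fam_scale_def \<phi>.add \<phi>.scale)
  also have "\<dots> = (\<Sum>k\<in>{k. u k \<noteq> 0}. c k * (\<Sum>j\<in>{j. v j \<noteq> 0}.
      d j * \<phi> (m11 (fam_single k (u k)) (fam_single j (v j)) z r n)))"
  proof (rule sum.cong[OF refl])
    fix k
    have uk: "fam_single k (u k) \<in> graded_space Wcl"
      using fam_single_in_graded_space[OF V(1,2) u] .
    show "c k * \<phi> (m11 (fam_single k (u k)) (fam_scale_by sc_op d v) z r n) =
        c k * (\<Sum>j\<in>{j. v j \<noteq> 0}. d j * \<phi> (m11 (fam_single k (u k)) (fam_single j (v j)) z r n))"
      by (subst linear_on_graded_space_fam_scale_by[OF V(3,4) _ _ v])
        (simp_all add: oc_field_algebra_11_add_op[OF alg uk _ _ zr]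
          oc_field_algebra_11_scale_op[OF alg uk _ zr],
         simp_all add: fam_add_def fam_scale_def \<phi>.add \<phi>.scale)
  qed
  finally show ?thesis
    by (simp add: sum_distrib_left mult.assoc)
qed

lemma oc_field_algebra_11_commutator_expansion:
  assumes alg: "oc_field_algebra_11 sc_cl Wcl sc_op Wop m11"
    and phi: "Vector_Spaces.linear sc_op (*) \<phi>"
    and u: "u \<in> graded_space Wcl" and v: "v \<in> graded_space Wop" and zr: "(z, r) \<in> pos_11"
  shows "\<phi> (fam_diff (d_op sc_op (m11 u v z r)) (m11 u (d_op sc_op v) z r) n)
      - \<phi> (m11 (d_cl_LR sc_cl u) v z r n) =
    (\<Sum>k\<in>{k. u k \<noteq> 0}. \<Sum>j\<in>{j. v j \<noteq> 0}.
       (n - (fst k + snd k) - j) *\<^sub>R \<phi> (m11 (fam_single k (u k)) (fam_single j (v j)) z r n))"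
proof -
  interpret \<phi>: Vector_Spaces.linear sc_op "(*)" \<phi> by fact
  note V = oc_field_algebra_11_vector_spaces[OF alg]
  note expand = oc_field_algebra_11_bilinear_expansion[OF alg phi u v zr]
  have u1: "fam_scale_by sc_cl (\<lambda>_. 1) u = u" and v1: "fam_scale_by sc_op (\<lambda>_. 1) v = v"
    using fam_scale_by_one V(1,3) by blast+
  have "\<phi> (m11 u v z r n) = (\<Sum>k\<in>{k. u k \<noteq> 0}. \<Sum>j\<in>{j. v j \<noteq> 0}.
      \<phi> (m11 (fam_single k (u k)) (fam_single j (v j)) z r n))"
    using expand[of "\<lambda>_. 1" "\<lambda>_. 1"] by (simp add: u1 v1)
  moreover have "\<phi> (m11 u (d_op sc_op v) z r n) = (\<Sum>k\<in>{k. u k \<noteq> 0}. \<Sum>j\<in>{j. v j \<noteq> 0}.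
      of_real j * \<phi> (m11 (fam_single k (u k)) (fam_single j (v j)) z r n))"
    using expand[of "\<lambda>_. 1" complex_of_real] by (simp add: u1 d_op_eq_fam_scale_by)
  moreover have "\<phi> (m11 (d_cl_LR sc_cl u) v z r n) = (\<Sum>k\<in>{k. u k \<noteq> 0}. \<Sum>j\<in>{j. v j \<noteq> 0}.
      of_real (fst k + snd k) * \<phi> (m11 (fam_single k (u k)) (fam_single j (v j)) z r n))"
    using expand[of "\<lambda>k. of_real (fst k + snd k)" "\<lambda>_. 1"]
    by (simp only: v1 d_cl_LR_eq_fam_scale_by mult_1_right)
  ultimately show ?thesis
    by (simp add: fam_diff_def d_op_def \<phi>.diff \<phi>.scale sum_distrib_left scaleR_conv_of_real
        flip: sum_subtractf)
      (simp add: algebra_simps)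
qed

lemma oc_field_algebra_11_dilation:
  assumes alg: "oc_field_algebra_11 sc_cl Wcl sc_op Wop m11"
    and phi: "Vector_Spaces.linear sc_op (*) \<phi>"
    and u: "u \<in> graded_space Wcl" and v: "v \<in> graded_space Wop" and zr: "(z, r) \<in> pos_11"
  shows "\<phi> (m11 u v (exp a *\<^sub>R z) (exp a * r) n) =
    (\<Sum>k\<in>{k. u k \<noteq> 0}. \<Sum>j\<in>{j. v j \<noteq> 0}.
       exp (a * (n - (fst k + snd k) - j)) *\<^sub>R
         \<phi> (m11 (fam_single k (u k)) (fam_single j (v j)) z r n))"
proof -
  interpret \<phi>: Vector_Spaces.linear sc_op "(*)" \<phi> by fact
  note V = oc_field_algebra_11_vector_spaces[OF alg]
  define u' where "u' = exp_d_cl_LR sc_cl (- a) u"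
  define v' where "v' = exp_d_op sc_op (- a) v"
  have u': "u' \<in> graded_space Wcl"
    unfolding u'_def exp_d_cl_LR_eq_fam_scale_by using fam_scale_by_in_graded_space[OF V(1,2) u] .
  have v': "v' \<in> graded_space Wop"
    unfolding v'_def exp_d_op_eq_fam_scale_by using fam_scale_by_in_graded_space[OF V(3,4) v] .
  have "exp_d_cl_LR sc_cl a u' = u" and "exp_d_op sc_op a v' = v"
    unfolding u'_def v'_def exp_d_cl_LR_eq_fam_scale_by exp_d_op_eq_fam_scale_by
    by (simp_all add: fam_scale_by_fam_scale_by[OF V(1)] fam_scale_by_fam_scale_by[OF V(3)]
        fam_scale_by_one[OF V(1)] fam_scale_by_one[OF V(3)] exp_minus_inverse flip: of_real_mult)
  then have "m11 u v (exp a *\<^sub>R z) (exp a * r) n = exp_d_op sc_op a (m11 u' v' z r) n"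
    using oc_field_algebra_11_grading[OF alg u' v' zr, of a] by (simp add: scaleR_conv_of_real)
  then have "\<phi> (m11 u v (exp a *\<^sub>R z) (exp a * r) n) =
      exp (a * n) *\<^sub>R \<phi> (m11 u' v' z r n)"
    by (simp add: exp_d_op_def \<phi>.scale scaleR_conv_of_real)
  also have "\<dots> = (\<Sum>k\<in>{k. u k \<noteq> 0}. \<Sum>j\<in>{j. v j \<noteq> 0}.
      (exp (a * n) * exp (- a * (fst k + snd k)) * exp (- a * j)) *\<^sub>R
        \<phi> (m11 (fam_single k (u k)) (fam_single j (v j)) z r n))"
    unfolding u'_def v'_def exp_d_cl_LR_eq_fam_scale_by exp_d_op_eq_fam_scale_by
      oc_field_algebra_11_bilinear_expansion[OF alg phi u v zr]
    by (simp add: scaleR_conv_of_real sum_distrib_left mult.assoc)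
  also have "\<dots> = (\<Sum>k\<in>{k. u k \<noteq> 0}. \<Sum>j\<in>{j. v j \<noteq> 0}.
       exp (a * (n - (fst k + snd k) - j)) *\<^sub>R
         \<phi> (m11 (fam_single k (u k)) (fam_single j (v j)) z r n))"
    by (simp add: mult_exp_exp algebra_simps)
  finally show ?thesis .
qed

lemma oc_field_algebra_11_dilation_has_vector_derivative:
  assumes "oc_field_algebra_11 sc_cl Wcl sc_op Wop m11"
    and "Vector_Spaces.linear sc_op (*) \<phi>"
    and "u \<in> graded_space Wcl" and "v \<in> graded_space Wop" and "(z, r) \<in> pos_11"
  shows "((\<lambda>a. \<phi> (m11 u v (exp a *\<^sub>R z) (exp a * r) n)) has_vector_derivative
    (\<Sum>k\<in>{k. u k \<noteq> 0}. \<Sum>j\<in>{j. v j \<noteq> 0}.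
       (n - (fst k + snd k) - j) *\<^sub>R \<phi> (m11 (fam_single k (u k)) (fam_single j (v j)) z r n)))
    (at 0)"
  unfolding oc_field_algebra_11_dilation[OF assms]
  by (intro derivative_eq_intros) auto

lemma has_vector_derivative_exp_scaleR_comp:
  fixes h :: "'a::real_normed_vector \<Rightarrow> 'b::real_normed_vector"
  assumes h: "(h has_derivative D) (at z)"
  shows "((\<lambda>a. h (exp a *\<^sub>R z)) has_vector_derivative D z) (at 0)"
proof -
  have "((\<lambda>a::real. exp a *\<^sub>R z) has_derivative (\<lambda>t. t *\<^sub>R z)) (at 0)"
    by (intro derivative_eq_intros) auto
  from diff_chain_at[OF this] h
  have "((\<lambda>a. h (exp a *\<^sub>R z)) has_derivative (\<lambda>t. D (t *\<^sub>R z))) (at 0)"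
    by (simp add: o_def)
  moreover have "D (t *\<^sub>R z) = t *\<^sub>R D z" for t
    using has_derivative_bounded_linear[OF h] by (simp add: linear_simps)
  ultimately show ?thesis
    by (simp add: has_vector_derivative_def)
qed

lemma C_k_on_Suc_imp_differentiable:
  "C_k_on (Suc k) S f \<Longrightarrow> x \<in> S \<Longrightarrow> f differentiable (at x within S)"
  by (auto simp: differentiable_def)

lemma oc_field_algebra_11_differentiable_in_position:
  assumes alg: "oc_field_algebra_11 sc_cl Wcl sc_op Wop m11"
    and phi: "Vector_Spaces.linear sc_op (*) \<phi>"
    and u: "u \<in> graded_space Wcl" and v: "v \<in> graded_space Wop"
    and z: "z \<in> upper_half_plane" and r: "0 \<le> r"
  shows "(\<lambda>w. \<phi> (m11 u v w r n)) differentiable (at z)"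
proof -
  define G where "G = (\<lambda>(w, r). \<phi> (m11 u v w r n))"
  have "C_k_on (Suc 0) pos_11 G"
    using oc_field_algebra_11_smooth[OF alg u v phi] by (simp add: smooth_on_def G_def)
  then have "G differentiable (at (z, r) within pos_11)"
    by (rule C_k_on_Suc_imp_differentiable) (simp add: pos_11_def z r)
  then have "G differentiable (at (z, r) within (\<lambda>w. (w, r)) ` upper_half_plane)"
    by (rule differentiable_within_subset) (auto simp: pos_11_def r)
  moreover have "(\<lambda>w. (w, r)) differentiable (at z within upper_half_plane)"
    unfolding differentiable_def by (intro exI derivative_eq_intros) auto
  ultimately have "(G \<circ> (\<lambda>w. (w, r))) differentiable (at z within upper_half_plane)"
    using differentiable_chain_within by blast
  moreover have "open upper_half_plane"
    using open_halfspace_Im_gt[of 0] by (simp add: upper_half_plane_def)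
  ultimately show ?thesis
    using at_within_open[OF z] by (simp add: G_def o_def)
qed

theorem proposition1p11:
  fixes sc_cl :: "complex \<Rightarrow> 'c::ab_group_add \<Rightarrow> 'c"
    and Wcl :: "real \<times> real \<Rightarrow> 'c set"
    and sc_op :: "complex \<Rightarrow> 'o::ab_group_add \<Rightarrow> 'o"
    and Wop :: "real \<Rightarrow> 'o set"
    and m11 :: "(real \<times> real \<Rightarrow> 'c) \<Rightarrow> (real \<Rightarrow> 'o) \<Rightarrow> complex \<Rightarrow> real \<Rightarrow> (real \<Rightarrow> 'o)"
    and Y :: "(real \<times> real \<Rightarrow> 'c) \<Rightarrow> complex \<Rightarrow> (real \<Rightarrow> 'o) \<Rightarrow> (real \<Rightarrow> 'o)"
  assumes alg: "oc_field_algebra_11 sc_cl Wcl sc_op Wop m11"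
    and Y_def: "\<And>u z v. Y u z v = m11 u v z 0"
    and u: "u \<in> graded_space Wcl"
    and v: "v \<in> graded_space Wop"
    and z: "z \<in> upper_half_plane"
    and phi: "Vector_Spaces.linear sc_op (*) (\<phi> :: 'o \<Rightarrow> complex)"
  shows "\<phi> (fam_diff (d_op sc_op (Y u z v)) (Y u z (d_op sc_op v)) n) =
           \<phi> (Y (d_cl_LR sc_cl u) z v n)
           + frechet_derivative (\<lambda>w. \<phi> (Y u w v n)) (at z) z"
proof -
  have z0: "(z, 0) \<in> pos_11"
    using z by (simp add: pos_11_def)
  obtain D where D: "((\<lambda>w. \<phi> (Y u w v n)) has_derivative D) (at z)"
    using oc_field_algebra_11_differentiable_in_position[OF alg phi u v z order_refl]
    by (auto simp: Y_def differentiable_def)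
  have "((\<lambda>a. \<phi> (Y u (exp a *\<^sub>R z) v n)) has_vector_derivative D z) (at 0)"
    using has_vector_derivative_exp_scaleR_comp[OF D] .
  moreover note oc_field_algebra_11_dilation_has_vector_derivative[OF alg phi u v z0, of n]
  ultimately have "D z = \<phi> (fam_diff (d_op sc_op (Y u z v)) (Y u z (d_op sc_op v)) n)
      - \<phi> (Y (d_cl_LR sc_cl u) z v n)"
    unfolding oc_field_algebra_11_commutator_expansion[OF alg phi u v z0, symmetric] Y_def
    using vector_derivative_unique_at by fastforce
  then show ?thesis
    using frechet_derivative_at[OF D] by simp
qed

end
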